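(* Let $E$ be a Hausdorff locally convex topological vector space and let $C$ be a set of real-valued functions on $E$, each Gateaux differentiable at $\hat{x}$, with $\hat{x}\in[C]^\times$, such that $\overline{\operatorname{conv}}^{w^*}\{d_G\phi(\hat{x}):\phi\in C\}$ is $w^*$-compact in $E^*$. Then $\mathcal{T}_C(\hat{x})\neq\emptyset$ if and only if $\inf_{\xi\in C}\xi(\hat{x})=0$. In particular, $\mathcal{T}_C(\hat{x})\neq\emptyset$ whenever $\hat{x}\in F\setminus\operatorname{int}(F)$, where $F$ is a nonempty subset of $E$ that is weak-admissible at $\hat{x}$ and determined by $C$.
   Context: $E^*$ carries the weak-star topology; $\overline{\operatorname{conv}}^{w^*}$ is the $w^*$-closed convex hull. Gateaux differentiability of $\phi$ at $x$: there is $d_G\phi(x)\in E^*$ with $\lim_{t\searrow0}(\phi(x+tv)-\phi(x))/t=\langle d_G\phi(x),v\rangle$ for all $v$. $[C]^\times:=\{x\in E:\phi(x)\ge0\ \forall\phi\in C\}$. $\mathcal{T}_C(\hat x):=\bigcap_{n\ge1}\overline{\operatorname{conv}}^{w^*}\{d_G\phi(\hat x):\phi\in C,\ \phi(\hat x)\in[0,1/n]\}$. $C$ is equi-Gateaux differentiable at $x$ if for every $v$, $\lim_{t\searrow0}\sup_{\phi\in C}|(\phi(x+tv)-\phi(x)-t\langle d_G\phi(x),v\rangle)/t|=0$; equi-lower semicontinuous at $x$ if for every $\varepsilon>0$ some open neighbourhood $O$ of $x$ satisfies $\phi(y)-\phi(x)>-\varepsilon$ for all $y\in O,\phi\in C$.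 $F$ is weak-admissible at $\hat x\in F$, determined by a nonempty family $C$, if: (a) $F=[C]^\times$; (b) $C$ is equi-Gateaux differentiable at $\hat x$; (c) $\{\phi\in C:\phi(\hat x)\ne0\}$ is empty or equi-lower semicontinuous at $\hat x$; (d) $\overline{\operatorname{conv}}^{w^*}\{d_G\phi(\hat x):\phi\in C\}$ is $w^*$-compact. *)

theory Defs
  imports "HOL-Analysis.Analysis"
begin

text \<open>Hausdorff locally convex topological vector space structure on a type:
  the Hausdorff property is the type class t2_space; here we require continuity of
  the vector operations and a base of convex open neighbourhoods of 0.\<close>
definition lctvs :: "'a::{real_vector,topological_space} itself \<Rightarrow> bool" where
  "lctvs _ \<longleftrightarrow>
     continuous_on UNIV (\<lambda>p::'a \<times> 'a. fst p + snd p) \<and>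
     continuous_on UNIV (\<lambda>p::real \<times> 'a. fst p *\<^sub>R snd p) \<and>
     (\<forall>U::'a set. open U \<and> 0 \<in> U \<longrightarrow> (\<exists>V. open V \<and> convex V \<and> 0 \<in> V \<and> V \<subseteq> U))"

definition dual_space :: "('a::{real_vector,topological_space} \<Rightarrow> real) set" where
  "dual_space = {f. linear f \<and> continuous_on UNIV f}"

definition fconv_hull :: "('a \<Rightarrow> real) set \<Rightarrow> ('a \<Rightarrow> real) set" where
  "fconv_hull S = {f. \<exists>(n::nat) (a::nat \<Rightarrow> real) g.
      (\<forall>i<n. 0 \<le> a i \<and> g i \<in> S) \<and> (\<Sum>i<n. a i) = 1 \<and> f = (\<lambda>x. \<Sum>i<n. a i * g i x)}"

text \<open>Weak-star closed convex hull in E*: the weak-star topology on E* is the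
  subspace topology of the product (pointwise) topology on 'a \<Rightarrow> real, so the
  closure within E* is the pointwise closure intersected with E*.\<close>
definition wstar_closed_conv_hull :: "('a::{real_vector,topological_space} \<Rightarrow> real) set \<Rightarrow> ('a \<Rightarrow> real) set" where
  "wstar_closed_conv_hull S = dual_space \<inter> closure (fconv_hull S)"

definition has_gateaux_derivative ::
  "('a::{real_vector,topological_space} \<Rightarrow> real) \<Rightarrow> ('a \<Rightarrow> real) \<Rightarrow> 'a \<Rightarrow> bool" where
  "has_gateaux_derivative \<phi> d x \<longleftrightarrow> d \<in> dual_space \<and>
     (\<forall>v. ((\<lambda>t. (\<phi> (x + t *\<^sub>R v) - \<phi> x) / t) \<longlongrightarrow> d v) (at_right 0))"

definition gateaux_differentiable :: "('a::{real_vector,topological_space} \<Rightarrow> real) \<Rightarrow> 'a \<Rightarrow> bool" where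
  "gateaux_differentiable \<phi> x \<longleftrightarrow> (\<exists>d. has_gateaux_derivative \<phi> d x)"

definition dG :: "('a::{real_vector,topological_space} \<Rightarrow> real) \<Rightarrow> 'a \<Rightarrow> ('a \<Rightarrow> real)" where
  "dG \<phi> x = (SOME d. has_gateaux_derivative \<phi> d x)"

definition feasible_set :: "('a \<Rightarrow> real) set \<Rightarrow> 'a set" where
  "feasible_set C = {x. \<forall>\<phi>\<in>C. \<phi> x \<ge> 0}"

definition T_cone :: "('a::{real_vector,topological_space} \<Rightarrow> real) set \<Rightarrow> 'a \<Rightarrow> ('a \<Rightarrow> real) set" where
  "T_cone C x = (\<Inter>n\<in>{1::nat..}.
     wstar_closed_conv_hull {dG \<phi> x | \<phi>. \<phi> \<in> C \<and> \<phi> x \<in> {0..1 / real n}})"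

definition equi_gateaux :: "('a::{real_vector,topological_space} \<Rightarrow> real) set \<Rightarrow> 'a \<Rightarrow> bool" where
  "equi_gateaux C x \<longleftrightarrow> (\<forall>v.
     ((\<lambda>t. SUP \<phi>\<in>C. ereal \<bar>(\<phi> (x + t *\<^sub>R v) - \<phi> x - t * dG \<phi> x v) / t\<bar>) \<longlongrightarrow> 0) (at_right 0))"

definition equi_lsc :: "('a::topological_space \<Rightarrow> real) set \<Rightarrow> 'a \<Rightarrow> bool" where
  "equi_lsc C x \<longleftrightarrow> (\<forall>\<epsilon>>0. \<exists>N. open N \<and> x \<in> N \<and> (\<forall>y\<in>N. \<forall>\<phi>\<in>C. \<phi> y - \<phi> x > - \<epsilon>))"

definition weak_admissible ::
  "'a::{real_vector,topological_space} set \<Rightarrow> 'a \<Rightarrow> ('a \<Rightarrow> real) set \<Rightarrow> bool" where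
  "weak_admissible F x C \<longleftrightarrow> x \<in> F \<and> C \<noteq> {} \<and>
     F = feasible_set C \<and>
     equi_gateaux C x \<and>
     ({\<phi>\<in>C. \<phi> x \<noteq> 0} = {} \<or> equi_lsc {\<phi>\<in>C. \<phi> x \<noteq> 0} x) \<and>
     compact (wstar_closed_conv_hull {dG \<phi> x | \<phi>. \<phi> \<in> C})"

end

theory Submission
  imports Defs
begin

text \<open>Both sides of the equivalence say that for every \<open>n \<ge> 1\<close> some constraint takes a value
  in \<open>[0, 1/n]\<close> at \<open>x\<close>. If so, the \<open>w*\<close>-closed convex hulls of the derivatives of these
  nearly active constraints form a downward directed family of nonempty sets, each the trace of
  a pointwise closed set on the compact hull of all derivatives, so they have a common point;
  conversely, a point of \<open>T_C(x)\<close> forces each of these derivative sets to be nonempty.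
  For a weak-admissible \<open>F\<close>, if all constraints exceeded some \<open>1/n\<close> at \<open>x\<close>, none would vanish
  there, and equi-lower semicontinuity would keep them nonnegative on a neighbourhood of \<open>x\<close>,
  putting \<open>x\<close> in the interior of \<open>F\<close>.\<close>

lemma fconv_hull_mono: "A \<subseteq> B \<Longrightarrow> fconv_hull A \<subseteq> fconv_hull B"
  unfolding fconv_hull_def by blast

lemma subset_fconv_hull: "S \<subseteq> fconv_hull S"
proof
  fix f assume "f \<in> S"
  then show "f \<in> fconv_hull S"
    unfolding fconv_hull_def
    by (intro CollectI exI[of _ 1] exI[of _ "\<lambda>_. 1"] exI[of _ "\<lambda>_. f"]) auto
qed

lemma fconv_hull_empty [simp]: "fconv_hull {} = {}"
  unfolding fconv_hull_def by (auto simp: lessThan_def)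

lemma wstar_closed_conv_hull_empty [simp]: "wstar_closed_conv_hull {} = {}"
  by (simp add: wstar_closed_conv_hull_def)

lemma subset_wstar_closed_conv_hull:
  "S \<subseteq> dual_space \<Longrightarrow> S \<subseteq> wstar_closed_conv_hull S"
  unfolding wstar_closed_conv_hull_def using subset_fconv_hull closure_subset
  by (meson Int_greatest subset_trans)

lemma wstar_closed_conv_hull_subset_eq:
  "A \<subseteq> B \<Longrightarrow> wstar_closed_conv_hull A = wstar_closed_conv_hull B \<inter> closure (fconv_hull A)"
  unfolding wstar_closed_conv_hull_def using closure_mono[OF fconv_hull_mono, of A B] by blast

lemma wstar_closed_conv_hull_mono:
  "A \<subseteq> B \<Longrightarrow> wstar_closed_conv_hull A \<subseteq> wstar_closed_conv_hull B"
  using wstar_closed_conv_hull_subset_eq by blast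

lemma dG_in_dual_space:
  assumes "gateaux_differentiable \<phi> x"
  shows "dG \<phi> x \<in> dual_space"
proof -
  obtain d where "has_gateaux_derivative \<phi> d x"
    using assms unfolding gateaux_differentiable_def ..
  then have "has_gateaux_derivative \<phi> (dG \<phi> x) x"
    unfolding dG_def by (rule someI[where P = "\<lambda>d. has_gateaux_derivative \<phi> d x"])
  then show ?thesis unfolding has_gateaux_derivative_def ..
qed

lemma compact_Int_Inter_directed:
  assumes "compact K" and "I \<noteq> {}"
    and closed: "\<And>i. i \<in> I \<Longrightarrow> closed (A i)"
    and meets: "\<And>i. i \<in> I \<Longrightarrow> K \<inter> A i \<noteq> {}"
    and directed: "\<And>i j. i \<in> I \<Longrightarrow> j \<in> I \<Longrightarrow> \<exists>k\<in>I. A k \<subseteq> A i \<inter> A j"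
  shows "K \<inter> (\<Inter>i\<in>I. A i) \<noteq> {}"
  using \<open>compact K\<close> closed
proof (rule compact_imp_fip_image)
  fix J assume "finite J" "J \<subseteq> I"
  then have "\<exists>k\<in>I. A k \<subseteq> (\<Inter>i\<in>J. A i)"
  proof (induction J rule: finite_induct)
    case empty
    then show ?case using \<open>I \<noteq> {}\<close> by blast
  next
    case (insert j J)
    then obtain k where "k \<in> I" "A k \<subseteq> (\<Inter>i\<in>J. A i)" by blast
    moreover obtain k' where "k' \<in> I" "A k' \<subseteq> A j \<inter> A k"
      using directed[of j k] insert.prems \<open>k \<in> I\<close> by blast
    ultimately have "A k' \<subseteq> (\<Inter>i\<in>insert j J. A i)" by auto
    with \<open>k' \<in> I\<close> show ?case ..
  qed
  then obtain k where "k \<in> I" "A k \<subseteq> (\<Inter>i\<in>J. A i)" ..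
  with meets show "K \<inter> (\<Inter>i\<in>J. A i) \<noteq> {}" by blast
qed

lemma INF_ereal_eq_0_iff:
  assumes "\<And>\<xi>. \<xi> \<in> C \<Longrightarrow> 0 \<le> f \<xi>"
  shows "(INF \<xi>\<in>C. ereal (f \<xi>)) = 0 \<longleftrightarrow> (\<forall>n\<ge>1. \<exists>\<xi>\<in>C. f \<xi> \<le> 1 / real n)"
proof
  assume inf0: "(INF \<xi>\<in>C. ereal (f \<xi>)) = 0"
  show "\<forall>n\<ge>1. \<exists>\<xi>\<in>C. f \<xi> \<le> 1 / real n"
  proof (intro allI impI, rule ccontr)
    fix n :: nat assume "n \<ge> 1" "\<not> (\<exists>\<xi>\<in>C. f \<xi> \<le> 1 / real n)"
    then have "ereal (1 / real n) \<le> (INF \<xi>\<in>C. ereal (f \<xi>))"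
      by (intro INF_greatest) auto
    then show False using inf0 \<open>n \<ge> 1\<close> by simp
  qed
next
  assume near: "\<forall>n\<ge>1. \<exists>\<xi>\<in>C. f \<xi> \<le> 1 / real n"
  have "(INF \<xi>\<in>C. ereal (f \<xi>)) \<le> 0"
  proof (rule ereal_le_epsilon2)
    fix e :: real assume "e > 0"
    then obtain n :: nat where "n \<ge> 1" "1 / real n < e"
      by (metis One_nat_def Suc_leI nat_approx_posE of_nat_Suc zero_less_Suc)
    moreover obtain \<xi> where "\<xi> \<in> C" "f \<xi> \<le> 1 / real n"
      using near \<open>n \<ge> 1\<close> by blast
    ultimately show "(INF \<xi>\<in>C. ereal (f \<xi>)) \<le> 0 + ereal e"
      by (intro INF_lower2[of \<xi>]) auto
  qed
  moreover have "0 \<le> (INF \<xi>\<in>C. ereal (f \<xi>))"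
    using assms by (intro INF_greatest) simp
  ultimately show "(INF \<xi>\<in>C. ereal (f \<xi>)) = 0" by (rule antisym)
qed

definition active_derivs ::
  "('a::{real_vector,topological_space} \<Rightarrow> real) set \<Rightarrow> 'a \<Rightarrow> real \<Rightarrow> ('a \<Rightarrow> real) set"
where
  "active_derivs C x \<epsilon> = {dG \<phi> x | \<phi>. \<phi> \<in> C \<and> \<phi> x \<in> {0..\<epsilon>}}"

lemma T_cone_eq_active_derivs:
  "T_cone C x = (\<Inter>n\<in>{1::nat..}. wstar_closed_conv_hull (active_derivs C x (1 / real n)))"
  unfolding T_cone_def active_derivs_def ..

lemma active_derivs_mono: "\<epsilon> \<le> \<delta> \<Longrightarrow> active_derivs C x \<epsilon> \<subseteq> active_derivs C x \<delta>"
  unfolding active_derivs_def by auto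

lemma active_derivs_subset: "active_derivs C x \<epsilon> \<subseteq> {dG \<phi> x | \<phi>. \<phi> \<in> C}"
  unfolding active_derivs_def by blast

lemma T_cone_nonempty_imp_active:
  assumes "T_cone C x \<noteq> {}" and "n \<ge> 1"
  shows "\<exists>\<phi>\<in>C. \<phi> x \<in> {0..1 / real n}"
proof -
  have "wstar_closed_conv_hull (active_derivs C x (1 / real n)) \<noteq> {}"
    using assms unfolding T_cone_eq_active_derivs by blast
  then have "active_derivs C x (1 / real n) \<noteq> {}" by auto
  then show ?thesis unfolding active_derivs_def by blast
qed

lemma T_cone_nonempty_if_active:
  assumes diff: "\<forall>\<phi>\<in>C. gateaux_differentiable \<phi> x"
    and compact: "compact (wstar_closed_conv_hull {dG \<phi> x | \<phi>. \<phi> \<in> C})"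
    and active: "\<forall>n\<ge>1. \<exists>\<phi>\<in>C. \<phi> x \<in> {0..1 / real n}"
  shows "T_cone C x \<noteq> {}"
proof -
  define K where "K = wstar_closed_conv_hull {dG \<phi> x | \<phi>. \<phi> \<in> C}"
  define A where "A n = closure (fconv_hull (active_derivs C x (1 / real n)))" for n :: nat
  have trace: "wstar_closed_conv_hull (active_derivs C x (1 / real n)) = K \<inter> A n" for n
    unfolding K_def A_def by (rule wstar_closed_conv_hull_subset_eq[OF active_derivs_subset])
  have "K \<inter> A n \<noteq> {}" if "n \<ge> 1" for n
  proof -
    obtain \<phi> where "\<phi> \<in> C" "\<phi> x \<in> {0..1 / real n}" using active \<open>n \<ge> 1\<close> by blast
    then have "dG \<phi> x \<in> active_derivs C x (1 / real n)" "dG \<phi> x \<in> dual_space"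
      using diff dG_in_dual_space unfolding active_derivs_def by blast+
    then have "dG \<phi> x \<in> wstar_closed_conv_hull (active_derivs C x (1 / real n))"
      using subset_wstar_closed_conv_hull[of "{dG \<phi> x}"]
        wstar_closed_conv_hull_mono[of "{dG \<phi> x}"] by blast
    then show ?thesis unfolding trace by blast
  qed
  moreover have "\<exists>k\<in>{1..}. A k \<subseteq> A i \<inter> A j" if "i \<in> {1..}" "j \<in> {1..}" for i j
  proof -
    have "A (max i j) \<subseteq> A m" if "m \<in> {i, j}" for m
      unfolding A_def using that \<open>i \<in> {1..}\<close> \<open>j \<in> {1..}\<close>
      by (intro closure_mono fconv_hull_mono active_derivs_mono) (auto simp: frac_le)
    then show ?thesis using that by (intro bexI[of _ "max i j"]) auto
  qed
  ultimately have "K \<inter> (\<Inter>n\<in>{1..}. A n) \<noteq> {}"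
    using compact unfolding K_def A_def
    by (intro compact_Int_Inter_directed) auto
  then show ?thesis
    unfolding T_cone_eq_active_derivs trace by blast
qed

lemma T_cone_nonempty_iff:
  assumes "\<forall>\<phi>\<in>C. gateaux_differentiable \<phi> x"
    and "x \<in> feasible_set C"
    and "compact (wstar_closed_conv_hull {dG \<phi> x | \<phi>. \<phi> \<in> C})"
  shows "T_cone C x \<noteq> {} \<longleftrightarrow> (\<forall>n\<ge>1. \<exists>\<phi>\<in>C. \<phi> x \<le> 1 / real n)"
proof -
  have "(\<forall>n\<ge>1. \<exists>\<phi>\<in>C. \<phi> x \<in> {0..1 / real n}) \<longleftrightarrow> (\<forall>n\<ge>1. \<exists>\<phi>\<in>C. \<phi> x \<le> 1 / real n)"
    using assms(2) unfolding feasible_set_def by auto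
  then show ?thesis
    using T_cone_nonempty_imp_active T_cone_nonempty_if_active[OF assms(1,3)] by blast
qed

lemma in_interior_feasible_set:
  assumes "equi_lsc C x" and "d > 0" and "\<forall>\<phi>\<in>C. d \<le> \<phi> x"
  shows "x \<in> interior (feasible_set C)"
proof -
  obtain N where "open N" "x \<in> N" and N: "\<forall>y\<in>N. \<forall>\<phi>\<in>C. \<phi> y - \<phi> x > - d"
    using assms(1,2) unfolding equi_lsc_def by blast
  have "N \<subseteq> feasible_set C"
    unfolding feasible_set_def using N assms(3) by fastforce
  with \<open>open N\<close> \<open>x \<in> N\<close> show ?thesis by (rule interiorI)
qed

lemma weak_admissible_boundary_imp_active:
  assumes "weak_admissible F x C" and "x \<notin> interior F"
  shows "\<forall>n\<ge>1. \<exists>\<phi>\<in>C. \<phi> x \<le> 1 / real n"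
proof (rule ccontr)
  assume "\<not> ?thesis"
  then obtain n :: nat where "n \<ge> 1" and above: "\<forall>\<phi>\<in>C. 1 / real n \<le> \<phi> x"
    by force
  then have "{\<phi>\<in>C. \<phi> x \<noteq> 0} = C" by fastforce
  moreover have "C \<noteq> {}" "F = feasible_set C"
    and "{\<phi>\<in>C. \<phi> x \<noteq> 0} = {} \<or> equi_lsc {\<phi>\<in>C. \<phi> x \<noteq> 0} x"
    using assms(1) unfolding weak_admissible_def by blast+
  ultimately have "equi_lsc C x" "F = feasible_set C" by simp_all
  moreover have "1 / real n > 0" using \<open>n \<ge> 1\<close> by simp
  ultimately have "x \<in> interior F" using above in_interior_feasible_set by blast
  with assms(2) show False ..
qed

theorem proposition3p10:
  fixes C :: "('a::{real_vector,t2_space} \<Rightarrow> real) set" and xh :: 'a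
  assumes "lctvs TYPE('a)"
    and "\<forall>\<phi>\<in>C. gateaux_differentiable \<phi> xh"
    and "xh \<in> feasible_set C"
    and "compact (wstar_closed_conv_hull {dG \<phi> xh | \<phi>. \<phi> \<in> C})"
  shows "(T_cone C xh \<noteq> {} \<longleftrightarrow> (INF \<xi>\<in>C. ereal (\<xi> xh)) = 0) \<and>
         (\<forall>F. F \<noteq> {} \<and> weak_admissible F xh C \<and> xh \<in> F - interior F \<longrightarrow> T_cone C xh \<noteq> {})"
proof -
  have T_iff: "T_cone C xh \<noteq> {} \<longleftrightarrow> (\<forall>n\<ge>1. \<exists>\<phi>\<in>C. \<phi> xh \<le> 1 / real n)"
    using assms(2-4) by (rule T_cone_nonempty_iff)
  moreover have "(INF \<xi>\<in>C. ereal (\<xi> xh)) = 0 \<longleftrightarrow> (\<forall>n\<ge>1. \<exists>\<phi>\<in>C. \<phi> xh \<le> 1 / real n)"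
    using assms(3) unfolding feasible_set_def by (intro INF_ereal_eq_0_iff) blast
  moreover have "T_cone C xh \<noteq> {}"
    if "weak_admissible F xh C" "xh \<in> F - interior F" for F
    using that weak_admissible_boundary_imp_active T_iff by blast
  ultimately show ?thesis by blast
qed

end
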